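(* Every SB-generated group has uncountable cofinality, i.e., it cannot be expressed as the union of a strictly increasing sequence $H_1\subsetneq H_2\subsetneq\cdots$ of subgroups.
   Context: A subset of a group $G$ is strongly bounded if it has finite diameter in every left-invariant metric on $G$; a group is SB-generated if it is generated by a strongly bounded subset. *)

theory Defs
  imports "HOL-Algebra.Algebra"
begin

definition left_invariant_metric :: "('a, 'b) monoid_scheme \<Rightarrow> ('a \<Rightarrow> 'a \<Rightarrow> real) \<Rightarrow> bool" where
  "left_invariant_metric G d \<longleftrightarrow>
     (\<forall>x\<in>carrier G. \<forall>y\<in>carrier G. 0 \<le> d x y) \<and>
     (\<forall>x\<in>carrier G. \<forall>y\<in>carrier G. d x y = 0 \<longleftrightarrow> x = y) \<and>
     (\<forall>x\<in>carrier G. \<forall>y\<in>carrier G. d x y = d y x) \<and>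
     (\<forall>x\<in>carrier G. \<forall>y\<in>carrier G. \<forall>z\<in>carrier G. d x z \<le> d x y + d y z) \<and>
     (\<forall>g\<in>carrier G. \<forall>x\<in>carrier G. \<forall>y\<in>carrier G. d (g \<otimes>\<^bsub>G\<^esub> x) (g \<otimes>\<^bsub>G\<^esub> y) = d x y)"

definition strongly_bounded :: "('a, 'b) monoid_scheme \<Rightarrow> 'a set \<Rightarrow> bool" where
  "strongly_bounded G A \<longleftrightarrow> A \<subseteq> carrier G \<and>
     (\<forall>d. left_invariant_metric G d \<longrightarrow> (\<exists>M::real. \<forall>x\<in>A. \<forall>y\<in>A. d x y \<le> M))"

definition SB_generated :: "('a, 'b) monoid_scheme \<Rightarrow> bool" where
  "SB_generated G \<longleftrightarrow> (\<exists>S. strongly_bounded G S \<and> generate G S = carrier G)"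

definition uncountable_cofinality :: "('a, 'b) monoid_scheme \<Rightarrow> bool" where
  "uncountable_cofinality G \<longleftrightarrow>
     \<not> (\<exists>H :: nat \<Rightarrow> 'a set. (\<forall>n. subgroup (H n) G) \<and> (\<forall>n. H n \<subset> H (Suc n))
          \<and> (\<Union>n. H n) = carrier G)"

end

theory Submission
  imports Defs
begin

text \<open>
  Let \<open>G = \<Union>n. H n\<close> for an increasing sequence of subgroups and let \<open>level g\<close> be the least
  \<open>n\<close> with \<open>g \<in> H n\<close>. Then \<open>d x y = level (x\<inverse> y) + 1\<close> for \<open>x \<noteq> y\<close> is a left-invariant
  ultrametric on \<open>G\<close>. A strongly bounded set \<open>S\<close> has finite \<open>d\<close>-diameter, so for a fixed
  \<open>s \<in> S\<close> all \<open>s\<inverse> x\<close> with \<open>x \<in> S\<close> lie in one \<open>H K\<close>, and hence \<open>S \<subseteq> H K\<close>.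
  If \<open>S\<close> generates \<open>G\<close>, then \<open>G = H K\<close>, so the sequence is eventually constant.
\<close>

locale subgroup_exhaustion = group G
  for G :: "('a, 'b) monoid_scheme" (structure) and H :: "nat \<Rightarrow> 'a set" +
  assumes subgroup_H: "subgroup (H n) G"
    and H_Suc: "H n \<subseteq> H (Suc n)"
    and Union_H: "(\<Union>n. H n) = carrier G"
begin

lemma H_mono: "m \<le> n \<Longrightarrow> H m \<subseteq> H n"
  using lift_Suc_mono_le[of H] H_Suc by blast

definition level :: "'a \<Rightarrow> nat" where
  "level g = (LEAST n. g \<in> H n)"

lemma mem_H_level:
  assumes "g \<in> carrier G"
  shows "g \<in> H (level g)"
proof -
  obtain n where "g \<in> H n"
    using assms Union_H by blast
  then show ?thesis
    unfolding level_def by (rule LeastI)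
qed

lemma mem_H_iff_level_le: "g \<in> carrier G \<Longrightarrow> g \<in> H n \<longleftrightarrow> level g \<le> n"
  using mem_H_level H_mono unfolding level_def by (blast intro: Least_le)

lemma level_mult_le:
  assumes "a \<in> carrier G" "b \<in> carrier G"
  shows "level (a \<otimes> b) \<le> max (level a) (level b)"
proof -
  have "a \<in> H (max (level a) (level b))" "b \<in> H (max (level a) (level b))"
    using assms by (simp_all add: mem_H_iff_level_le)
  then show ?thesis
    using assms by (simp add: subgroup.m_closed[OF subgroup_H] flip: mem_H_iff_level_le)
qed

lemma level_inv: "a \<in> carrier G \<Longrightarrow> level (inv a) = level a"
  by (metis mem_H_iff_level_le subgroup.m_inv_closed[OF subgroup_H] inv_closed inv_inv order.refl
      order.antisym)

definition level_dist :: "'a \<Rightarrow> 'a \<Rightarrow> real" where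
  "level_dist x y = (if x = y then 0 else real (level (inv x \<otimes> y)) + 1)"

lemma left_invariant_metric_level_dist: "left_invariant_metric G level_dist"
proof -
  have sym: "level_dist x y = level_dist y x" if "x \<in> carrier G" "y \<in> carrier G" for x y
    using that level_inv[of "inv x \<otimes> y"] by (simp add: level_dist_def inv_mult_group)
  have triangle: "level_dist x z \<le> level_dist x y + level_dist y z"
    if "x \<in> carrier G" "y \<in> carrier G" "z \<in> carrier G" for x y z
  proof -
    have "inv x \<otimes> z = (inv x \<otimes> y) \<otimes> (inv y \<otimes> z)"
      using that by (simp add: m_assoc flip: m_assoc[of y "inv y"])
    then have "level (inv x \<otimes> z) \<le> max (level (inv x \<otimes> y)) (level (inv y \<otimes> z))"
      using that by (simp add: level_mult_le)
    then show ?thesis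
      by (auto simp: level_dist_def)
  qed
  have invariant: "level_dist (g \<otimes> x) (g \<otimes> y) = level_dist x y"
    if "g \<in> carrier G" "x \<in> carrier G" "y \<in> carrier G" for g x y
  proof -
    have "inv (g \<otimes> x) \<otimes> (g \<otimes> y) = inv x \<otimes> y"
      using that by (simp add: inv_mult_group m_assoc flip: m_assoc[of "inv g"])
    then show ?thesis
      using that by (simp add: level_dist_def)
  qed
  show ?thesis
    unfolding left_invariant_metric_def
    using sym triangle invariant by (simp add: level_dist_def)
qed

lemma strongly_bounded_subset_H:
  assumes "strongly_bounded G S"
  obtains K where "S \<subseteq> H K"
proof (cases "S = {}")
  case False
  then obtain s where s: "s \<in> S"
    by blast
  obtain M where M: "\<And>x. x \<in> S \<Longrightarrow> level_dist s x \<le> M" and S: "S \<subseteq> carrier G"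
    using assms s left_invariant_metric_level_dist unfolding strongly_bounded_def by blast
  define K where "K = max (level s) (nat \<lceil>M\<rceil>)"
  have s_H: "s \<in> H K"
    using s S by (simp add: K_def mem_H_iff_level_le subset_iff)
  have "x \<in> H K" if x: "x \<in> S" for x
  proof (cases "x = s")
    case False
    with M[OF x] have "real (level (inv s \<otimes> x)) + 1 \<le> M"
      by (simp add: level_dist_def)
    then have "level (inv s \<otimes> x) \<le> K"
      unfolding K_def by linarith
    then have "inv s \<otimes> x \<in> H K"
      using s x S by (simp add: mem_H_iff_level_le subset_iff)
    then have "s \<otimes> (inv s \<otimes> x) \<in> H K"
      using s_H by (simp add: subgroup.m_closed[OF subgroup_H])
    then show ?thesis
      using s x S by (simp add: subset_iff flip: m_assoc)
  qed (use s_H in simp)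
  then show ?thesis
    using that by blast
qed (use that in blast)

lemma SB_generated_imp_H_eq_carrier:
  assumes "SB_generated G"
  obtains K where "H K = carrier G"
proof -
  obtain S where S: "strongly_bounded G S" "generate G S = carrier G"
    using assms unfolding SB_generated_def by blast
  obtain K where "S \<subseteq> H K"
    using S(1) by (rule strongly_bounded_subset_H)
  then have "carrier G \<subseteq> H K"
    using generate_subgroup_incl[OF _ subgroup_H] S(2) by metis
  then show ?thesis
    using that Union_H by blast
qed

end

theorem proposition2p6:
  fixes G :: "('a, 'b) monoid_scheme"
  assumes "group G" and "SB_generated G"
  shows "uncountable_cofinality G"
  unfolding uncountable_cofinality_def
proof
  assume "\<exists>H. (\<forall>n. subgroup (H n) G) \<and> (\<forall>n. H n \<subset> H (Suc n)) \<and> (\<Union>n. H n) = carrier G"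
  then obtain H where H: "\<And>n. subgroup (H n) G" "\<And>n. H n \<subset> H (Suc n)" "(\<Union>n. H n) = carrier G"
    by blast
  interpret subgroup_exhaustion G H
    using assms(1) H by (auto simp: subgroup_exhaustion_def subgroup_exhaustion_axioms_def)
  obtain K where "H K = carrier G"
    using assms(2) by (rule SB_generated_imp_H_eq_carrier)
  with H(2)[of K] Union_H show False
    by blast
qed

end
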